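(* Let $\xi=(\xi_1,\xi_2)$ be uniformly distributed on $\Theta:=([-1,1]\times[0,1])\cup([0,1]\times[-1,0])\subset\mathbb{R}^2$ and let $p=1/3$. Policies are pairs $y=(y_1,y_2(\cdot))$ with $y_1\in\mathbb{R}$ and $y_2:\mathbb{R}\to\mathbb{R}$ Borel measurable, and $h(y):=y_1$. Let $M_1:=\{y: \mathbb{P}(\xi_1\le y_1,\ \xi_2\le y_2(\xi_1))\ge 1/3,\ y_1\in[0,1],\ y_2(\xi_1)\in[0,1]\ \mathbb{P}\text{-a.s.}\}$, $M_2:=\{y:\mathbb{P}(\xi_1\le y_1,\ \xi_2\le y_2(\xi_1),\ y_1\in[0,1],\ y_2(\xi_1)\in[0,1])\ge 1/3\}$, $\Pi(y_1,y_2(\cdot)):=(\max\{0,\min\{y_1,1\}\},\max\{0,\min\{y_2(\cdot),1\}\})$, and $\mathcal{K}:=\{(y_1,y_2): y_1\in\mathbb{R},\ \exists a\ge -1 \text{ with } y_2(\xi_1)=a\xi_1\}$. With $\varphi,\varphi_1,\varphi_2,\varphi_3,\varphi_4$ defined as: $\varphi:=\inf\{h(y):y\in M_1\}$, $\varphi_1:=\inf\{h(y):y\in M_1\cap\mathcal{K}\}$, $\varphi_2:=\inf\{h(z):z\in\Pi(\arg\min\{h(y):y\in M_2\cap\mathcal{K}\})\}$, $\varphi_3:=\inf\{h(y):y\in\Pi(M_2\cap\mathcal{K})\}$, $\varphi_4:=\inf\{h(y):y\in M_1\cap\Pi(\mathcal{K})\}$, one has \[ \varphi=0,\quad \varphi_1=1,\quad\varphi_2=\varphi_3=2/3,\quad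 \varphi_4=1/2. \] Moreover, $(2/3,\tfrac32\xi_1)$ is the unique minimizer of $h$ over $M_2\cap\mathcal{K}$, $\Pi(2/3,\tfrac32\xi_1)=(2/3,\max\{0,\min\{\tfrac32\xi_1,1\}\})$ solves the problem defining $\varphi_3$, and $\varphi_4$ is attained at $(1/2,\max\{0,\min\{-\xi_1,1\}\})=\Pi(1/2,-\xi_1)$. *)

theory Defs
  imports "HOL-Probability.Probability"
begin

definition Theta :: "(real \<times> real) set" where
  "Theta = ({-1..1} \<times> {0..1}) \<union> ({0..1} \<times> {-1..0})"

definition Pxi :: "(real \<times> real) measure" where
  "Pxi = uniform_measure lborel Theta"

type_synonym policy = "real \<times> (real \<Rightarrow> real)"

definition h :: "policy \<Rightarrow> real" where
  "h y = fst y"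

definition policies :: "policy set" where
  "policies = {y. snd y \<in> borel_measurable borel}"

definition M1 :: "policy set" where
  "M1 = {y \<in> policies.
      measure Pxi {x. fst x \<le> fst y \<and> snd x \<le> snd y (fst x)} \<ge> 1/3
    \<and> fst y \<in> {0..1}
    \<and> (AE x in Pxi. snd y (fst x) \<in> {0..1})}"

definition M2 :: "policy set" where
  "M2 = {y \<in> policies.
      measure Pxi {x. fst x \<le> fst y \<and> snd x \<le> snd y (fst x)
                   \<and> fst y \<in> {0..1} \<and> snd y (fst x) \<in> {0..1}} \<ge> 1/3}"

definition clip :: "real \<Rightarrow> real" where
  "clip t = max 0 (min t 1)"

definition Proj :: "policy \<Rightarrow> policy" where
  "Proj y = (clip (fst y), (\<lambda>t. clip (snd y t)))"

definition K :: "policy set" where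
  "K = {y \<in> policies. \<exists>a::real. a \<ge> -1 \<and> snd y = (\<lambda>t. a * t)}"

definition argmin_h :: "policy set \<Rightarrow> policy set" where
  "argmin_h S = {y \<in> S. \<forall>z \<in> S. h y \<le> h z}"

definition phi :: real where "phi = Inf (h ` M1)"
definition phi1 :: real where "phi1 = Inf (h ` (M1 \<inter> K))"
definition phi2 :: real where "phi2 = Inf (h ` (Proj ` argmin_h (M2 \<inter> K)))"
definition phi3 :: real where "phi3 = Inf (h ` (Proj ` (M2 \<inter> K)))"
definition phi4 :: real where "phi4 = Inf (h ` (M1 \<inter> Proj ` K))"

end

theory Submission imports Defs begin

text \<open>
  Every probability under \<open>Pxi\<close> is one third of the area of an event inside \<open>\<Theta>\<close>, and all
  events that occur are, up to null lines, unions of trapezoids under straight lines.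
  Without restriction, \<open>(0, 1)\<close> is feasible for \<open>M1\<close> since \<open>{\<xi>\<^sub>1 \<le> 0}\<close> has area 1.
  For a linear rule \<open>y\<^sub>2 = a\<xi>\<^sub>1\<close>, the almost-sure constraint of \<open>M1\<close> on both halves of \<open>\<Theta>\<close>
  forces \<open>a = 0\<close>, and then \<open>{\<xi>\<^sub>1 \<le> y\<^sub>1, \<xi>\<^sub>2 \<le> 0}\<close> has area \<open>y\<^sub>1\<close>, so \<open>y\<^sub>1 = 1\<close>.
  In \<open>M2\<close> only the event matters: for \<open>a < 0\<close> it has area at most 1/2, for \<open>a = 0\<close> area \<open>y\<^sub>1\<close>,
  and for \<open>a > 0\<close> it lies over \<open>[0, m]\<close> with \<open>m = min y\<^sub>1 (1/a)\<close> and has area \<open>m (am/2 + 1) \<le> 3m/2\<close>;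
  area 1 thus forces \<open>y\<^sub>1 \<ge> 2/3\<close>, with equality only for \<open>a = 3/2\<close>. After clipping, a rule with
  \<open>-1 \<le> a \<le> 0\<close> yields an event of area at most \<open>1/2 + y\<^sub>1\<close> and one with \<open>a > 0\<close> area at most \<open>2y\<^sub>1\<close>,
  whence \<open>y\<^sub>1 \<ge> 1/2\<close>, attained by \<open>a = -1\<close>.
\<close>

definition trapezoid :: "real \<Rightarrow> real \<Rightarrow> real \<Rightarrow> real \<Rightarrow> real \<Rightarrow> (real \<times> real) set" where
  "trapezoid l u c a b = {p. l \<le> fst p \<and> fst p \<le> u \<and> c \<le> snd p \<and> snd p \<le> a * fst p + b}"

lemma sets_borel_pairI:
  assumes "Measurable.pred (borel \<Otimes>\<^sub>M borel) P"
  shows "{p::real \<times> real. P p} \<in> sets borel"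
  using assms by (simp add: pred_def space_pair_measure borel_prod)

lemma trapezoid_sets [measurable, simp]: "trapezoid l u c a b \<in> sets borel"
  unfolding trapezoid_def by (rule sets_borel_pairI) measurable

lemma emeasure_trapezoid:
  fixes l u c a b :: real
  assumes "l \<le> u" and above: "\<And>x. l \<le> x \<Longrightarrow> x \<le> u \<Longrightarrow> c \<le> a * x + b"
  shows "emeasure lborel (trapezoid l u c a b) = ennreal ((u - l) * (a * (u + l) / 2 + b - c))"
proof -
  let ?T = "trapezoid l u c a b"
  have "emeasure lborel ?T = emeasure (lborel \<Otimes>\<^sub>M lborel) ?T"
    by (simp add: lborel_prod)
  also have "\<dots> = (\<integral>\<^sup>+x. emeasure lborel (Pair x -` ?T) \<partial>lborel)"
    by (rule lborel.emeasure_pair_measure_alt) (subst lborel_prod, simp)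
  also have "\<dots> = (\<integral>\<^sup>+x. ennreal (indicator {l..u} x * (a * x + b - c)) \<partial>lborel)"
  proof (rule nn_integral_cong)
    fix x :: real
    show "emeasure lborel (Pair x -` ?T) = ennreal (indicator {l..u} x * (a * x + b - c))"
    proof (cases "l \<le> x \<and> x \<le> u")
      case True
      then have "Pair x -` ?T = {c..a * x + b}" by (auto simp: trapezoid_def)
      then show ?thesis using True above[of x] by (simp add: indicator_def)
    next
      case False
      then have "Pair x -` ?T = {}" by (auto simp: trapezoid_def)
      then show ?thesis using False by (auto simp: indicator_def)
    qed
  qed
  also have "\<dots> = ennreal ((u - l) * (a * (u + l) / 2 + b - c))"
  proof -
    have "\<And>x. ((\<lambda>x. a * x\<^sup>2 / 2 + (b - c) * x) has_vector_derivative (a * x + b - c)) (at x within {l..u})"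
      by (auto intro!: derivative_eq_intros
          simp: has_real_derivative_iff_has_vector_derivative[symmetric] algebra_simps)
    then have "((\<lambda>x. a * x + b - c) has_integral
        ((a * u\<^sup>2 / 2 + (b - c) * u) - (a * l\<^sup>2 / 2 + (b - c) * l))) {l..u}"
      using \<open>l \<le> u\<close> by (intro fundamental_theorem_of_calculus) auto
    moreover have "(a * u\<^sup>2 / 2 + (b - c) * u) - (a * l\<^sup>2 / 2 + (b - c) * l)
        = (u - l) * (a * (u + l) / 2 + b - c)"
      by (simp add: power2_eq_square field_simps)
    ultimately have "((\<lambda>x. a * x + b - c) has_integral ((u - l) * (a * (u + l) / 2 + b - c))) {l..u}"
      by simp
    then show ?thesis
      using above by (subst nn_integral_has_integral_lebesgue) auto
  qed
  finally show ?thesis .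
qed

lemma null_sets_vertical_line: "{p::real \<times> real. fst p = t} \<in> null_sets lborel"
proof -
  have "{t} \<times> UNIV \<in> null_sets (lborel \<Otimes>\<^sub>M (lborel :: real measure))"
    by (intro lborel.times_in_null_sets1) auto
  moreover have "{p::real \<times> real. fst p = t} = {t} \<times> UNIV" by auto
  ultimately show ?thesis by (simp add: lborel_prod)
qed

lemma null_sets_horizontal_line: "{p::real \<times> real. snd p = t} \<in> null_sets lborel"
proof -
  have "UNIV \<times> {t} \<in> null_sets ((lborel :: real measure) \<Otimes>\<^sub>M lborel)"
    by (intro lborel.times_in_null_sets2) auto
  moreover have "{p::real \<times> real. snd p = t} = UNIV \<times> {t}" by auto
  ultimately show ?thesis by (simp add: lborel_prod)
qed

lemma Theta_eq_trapezoids: "Theta = trapezoid (-1) 1 0 0 1 \<union> trapezoid 0 1 (-1) 0 0"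
  by (auto simp: Theta_def trapezoid_def)

lemma Theta_sets [measurable, simp]: "Theta \<in> sets borel"
  unfolding Theta_eq_trapezoids by (intro sets.Un trapezoid_sets)

lemma emeasure_Theta: "emeasure lborel Theta = 3"
proof -
  have "trapezoid (-1) 1 0 0 1 \<inter> trapezoid 0 1 (-1) 0 0 \<in> null_sets lborel"
    by (rule null_sets_subset[OF null_sets_horizontal_line[of 0]]) (simp, auto simp: trapezoid_def)
  then have "emeasure lborel Theta
      = emeasure lborel (trapezoid (-1) 1 0 0 1) + emeasure lborel (trapezoid 0 1 (-1) 0 0)"
    unfolding Theta_eq_trapezoids by (intro emeasure_Un') simp_all
  also have "\<dots> = ennreal 2 + ennreal 1"
    by (simp add: emeasure_trapezoid)
  finally show ?thesis by (simp flip: ennreal_plus)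
qed

lemma prob_space_Pxi: "prob_space Pxi"
  unfolding Pxi_def by (rule prob_space_uniform_measure) (simp_all add: emeasure_Theta)

lemma sets_Pxi [simp]: "sets Pxi = sets borel"
  by (simp add: Pxi_def)

lemma measure_Pxi: "A \<in> sets borel \<Longrightarrow> measure Pxi A = measure lborel (Theta \<inter> A) / 3"
  unfolding Pxi_def
  by (subst measure_uniform_measure) (simp_all add: emeasure_Theta measure_def)

lemma measure_Pxi_le:
  assumes cover: "A \<inter> Theta \<subseteq> N \<union> Z" and N: "N \<in> sets borel" and Z: "Z \<in> null_sets lborel"
    and area: "emeasure lborel N \<le> ennreal v" and "0 \<le> v"
  shows "measure Pxi A \<le> v / 3"
proof -
  interpret prob_space Pxi by (rule prob_space_Pxi)
  let ?B = "N \<union> Z \<union> - Theta"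
  have B: "?B \<in> sets borel" using N Z by auto
  have "emeasure lborel (Theta \<inter> ?B) \<le> emeasure lborel (N \<union> Z)"
    using N Z by (intro emeasure_mono) auto
  also have "\<dots> = emeasure lborel N"
    using N Z by (simp add: emeasure_Un_null_set)
  finally have "measure lborel (Theta \<inter> ?B) \<le> v"
    using area \<open>0 \<le> v\<close> by (simp add: measure_def enn2real_leI)
  moreover have "measure Pxi A \<le> measure Pxi ?B"
    using cover B by (intro finite_measure_mono) auto
  ultimately show ?thesis
    using B by (simp add: measure_Pxi)
qed

lemma measure_Pxi_ge:
  assumes A: "A \<in> sets borel" and inside: "N \<subseteq> A \<inter> Theta" and N: "N \<in> sets borel"
    and area: "ennreal v \<le> emeasure lborel N" and "0 \<le> v"
  shows "v / 3 \<le> measure Pxi A"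
proof -
  have "emeasure lborel N \<le> emeasure lborel (Theta \<inter> A)"
    using inside A by (intro emeasure_mono) auto
  with area have "ennreal v \<le> emeasure lborel (Theta \<inter> A)"
    by (rule order.trans)
  moreover have "emeasure lborel (Theta \<inter> A) \<le> 3"
    using emeasure_mono[of "Theta \<inter> A" Theta lborel] A by (simp add: emeasure_Theta)
  then have "emeasure lborel (Theta \<inter> A) < \<top>"
    by (simp add: order_le_less_trans)
  ultimately have "enn2real (ennreal v) \<le> measure lborel (Theta \<inter> A)"
    unfolding measure_def by (rule enn2real_mono)
  then show ?thesis using A \<open>0 \<le> v\<close> by (simp add: measure_Pxi)
qed

lemma AE_Pxi_imp_null_sets:
  assumes "AE x in Pxi. P x" and B: "B \<in> sets borel" "B \<subseteq> Theta" "\<forall>x\<in>B. \<not> P x"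
  shows "B \<in> null_sets lborel"
proof -
  have "AE x in lborel. x \<in> Theta \<longrightarrow> P x"
    using assms(1) unfolding Pxi_def by (subst (asm) AE_uniform_measure) (simp_all add: emeasure_Theta)
  then have "AE x in lborel. x \<notin> B"
    by (rule eventually_mono) (use B in auto)
  moreover have "B \<in> sets lborel" using B(1) by simp
  ultimately show ?thesis
    by (simp add: AE_iff_measurable null_sets_def)
qed

definition M1_event :: "real \<Rightarrow> (real \<Rightarrow> real) \<Rightarrow> (real \<times> real) set" where
  "M1_event c g = {x. fst x \<le> c \<and> snd x \<le> g (fst x)}"

definition M2_event :: "real \<Rightarrow> (real \<Rightarrow> real) \<Rightarrow> (real \<times> real) set" where
  "M2_event c g = {x. fst x \<le> c \<and> snd x \<le> g (fst x) \<and> c \<in> {0..1} \<and> g (fst x) \<in> {0..1}}"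

lemma M1_event_sets:
  assumes [measurable]: "g \<in> borel_measurable borel"
  shows "M1_event c g \<in> sets borel"
  unfolding M1_event_def by (rule sets_borel_pairI) measurable

lemma M2_event_sets:
  assumes [measurable]: "g \<in> borel_measurable borel"
  shows "M2_event c g \<in> sets borel"
  unfolding M2_event_def by (rule sets_borel_pairI) measurable

lemma M1_iff: "y \<in> M1 \<longleftrightarrow> snd y \<in> borel_measurable borel \<and> 1/3 \<le> measure Pxi (M1_event (fst y) (snd y))
    \<and> fst y \<in> {0..1} \<and> (AE x in Pxi. snd y (fst x) \<in> {0..1})"
  by (auto simp: M1_def M1_event_def policies_def)

lemma M2_iff: "y \<in> M2 \<longleftrightarrow> snd y \<in> borel_measurable borel \<and> 1/3 \<le> measure Pxi (M2_event (fst y) (snd y))"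
  by (auto simp: M2_def M2_event_def policies_def)

lemma M2_fst_in_unit: "y \<in> M2 \<Longrightarrow> fst y \<in> {0..1}"
  by (cases "fst y \<in> {0..1}") (auto simp: M2_iff M2_event_def)

lemma clip_bounds [simp]: "0 \<le> clip t" "clip t \<le> 1"
  by (simp_all add: clip_def)

lemma clip_eq_self: "t \<in> {0..1} \<Longrightarrow> clip t = t"
  by (simp add: clip_def)

lemma linear_rule_in_K: "-1 \<le> a \<Longrightarrow> (c, \<lambda>t. a * t) \<in> K"
  by (auto simp: K_def policies_def)

lemma measure_M1_event_zero:
  assumes "0 \<le> c"
  shows "measure Pxi (M1_event c (\<lambda>_. 0)) \<le> c / 3"
proof (rule measure_Pxi_le[OF _ trapezoid_sets null_sets_horizontal_line[of 0]])
  show "M1_event c (\<lambda>_. 0) \<inter> Theta \<subseteq> trapezoid 0 c (-1) 0 0 \<union> {p. snd p = 0}"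
    by (auto simp: M1_event_def Theta_def trapezoid_def)
qed (use assms in \<open>simp_all add: emeasure_trapezoid\<close>)

lemma measure_M2_event_neg_slope:
  assumes "-1 \<le> a" "a < 0"
  shows "measure Pxi (M2_event c (\<lambda>t. a * t)) \<le> 1/6"
proof -
  have "M2_event c (\<lambda>t. a * t) \<inter> Theta \<subseteq> trapezoid (-1) 0 0 (-1) 0 \<union> {p. fst p = 0}"
  proof
    fix x assume x: "x \<in> M2_event c (\<lambda>t. a * t) \<inter> Theta"
    show "x \<in> trapezoid (-1) 0 0 (-1) 0 \<union> {p. fst p = 0}"
    proof (cases "fst x < 0")
      case True
      have "(a + 1) * fst x \<le> 0" using assms True by (intro mult_nonneg_nonpos) auto
      then show ?thesis using x True by (auto simp: M2_event_def Theta_def trapezoid_def algebra_simps)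
    next
      case False
      then have "fst x = 0" using x assms by (auto simp: M2_event_def zero_le_mult_iff)
      then show ?thesis by simp
    qed
  qed
  then have "measure Pxi (M2_event c (\<lambda>t. a * t)) \<le> (1/2) / 3"
    by (rule measure_Pxi_le[OF _ trapezoid_sets null_sets_vertical_line]) (simp_all add: emeasure_trapezoid)
  then show ?thesis by simp
qed

lemma measure_M2_event_pos_slope:
  assumes "0 < a" "0 \<le> c"
  defines "m \<equiv> min c (1 / a)"
  shows "measure Pxi (M2_event c (\<lambda>t. a * t)) \<le> m * (a * m / 2 + 1) / 3"
proof (rule measure_Pxi_le)
  show "M2_event c (\<lambda>t. a * t) \<inter> Theta \<subseteq> trapezoid 0 m (-1) a 0 \<union> {}"
    using assms by (auto simp: M2_event_def Theta_def trapezoid_def m_def zero_le_mult_iff field_simps)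
  show "emeasure lborel (trapezoid 0 m (-1) a 0) \<le> ennreal (m * (a * m / 2 + 1))"
    using assms by (subst emeasure_trapezoid) (auto simp: m_def intro: order.trans[of _ 0])
qed (use assms in \<open>auto simp: m_def trapezoid_sets\<close>)

lemma measure_M1_event_clip_nonpos_slope:
  assumes "-1 \<le> a" "a \<le> 0" "0 \<le> c"
  shows "measure Pxi (M1_event c (\<lambda>t. clip (a * t))) \<le> (1/2 + c) / 3"
proof (rule measure_Pxi_le)
  let ?T = "trapezoid (-1) 0 0 (-1) 0 \<union> trapezoid 0 c (-1) 0 0"
  show "M1_event c (\<lambda>t. clip (a * t)) \<inter> Theta \<subseteq> ?T \<union> {}"
  proof
    fix x assume x: "x \<in> M1_event c (\<lambda>t. clip (a * t)) \<inter> Theta"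
    show "x \<in> ?T \<union> {}"
    proof (cases "fst x < 0")
      case True
      have "(a + 1) * fst x \<le> 0" using assms True by (intro mult_nonneg_nonpos) auto
      then show ?thesis using x True by (auto simp: M1_event_def Theta_def trapezoid_def clip_def algebra_simps)
    next
      case False
      have "a * fst x \<le> 0" using assms False by (intro mult_nonpos_nonneg) auto
      then show ?thesis using x False by (auto simp: M1_event_def Theta_def trapezoid_def clip_def)
    qed
  qed
  have "emeasure lborel ?T \<le> emeasure lborel (trapezoid (-1) 0 0 (-1) 0) + emeasure lborel (trapezoid 0 c (-1) 0 0)"
    by (intro emeasure_subadditive) simp_all
  also have "\<dots> = ennreal (1/2 + c)"
    using assms by (simp add: emeasure_trapezoid ennreal_plus)
  finally show "emeasure lborel ?T \<le> ennreal (1/2 + c)" .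
qed (use assms in \<open>auto intro: trapezoid_sets\<close>)

lemma measure_M1_event_clip_pos_slope:
  assumes "0 < a" "0 \<le> c"
  shows "measure Pxi (M1_event c (\<lambda>t. clip (a * t))) \<le> 2 * c / 3"
proof (rule measure_Pxi_le[OF _ trapezoid_sets null_sets_horizontal_line[of 0]])
  show "M1_event c (\<lambda>t. clip (a * t)) \<inter> Theta \<subseteq> trapezoid 0 c (-1) 0 1 \<union> {p. snd p = 0}"
  proof
    fix x assume x: "x \<in> M1_event c (\<lambda>t. clip (a * t)) \<inter> Theta"
    show "x \<in> trapezoid 0 c (-1) 0 1 \<union> {p. snd p = 0}"
    proof (cases "fst x < 0")
      case True
      have "a * fst x \<le> 0" using assms True by (intro mult_nonneg_nonpos) auto
      then show ?thesis using x True by (auto simp: M1_event_def Theta_def trapezoid_def clip_def)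
    next
      case False
      then show ?thesis using x by (auto simp: M1_event_def Theta_def trapezoid_def clip_def)
    qed
  qed
qed (use assms in \<open>simp_all add: emeasure_trapezoid\<close>)

lemma M1_linear_rule_slope_zero:
  assumes "(c, \<lambda>t. a * t) \<in> M1"
  shows "a = 0"
proof -
  have AE: "AE x in Pxi. a * fst x \<in> {0..1}" using assms by (simp add: M1_iff)
  \<comment> \<open>a nonzero slope makes \<open>a * \<xi>\<^sub>1\<close> negative on a strip of positive area in \<open>\<Theta>\<close>\<close>
  have "trapezoid l u 0 0 1 \<notin> null_sets lborel" if "l < u" for l u :: real
    using that by (simp add: null_sets_def emeasure_trapezoid)
  moreover have "a < 0 \<Longrightarrow> trapezoid (1/2) 1 0 0 1 \<in> null_sets lborel"
    by (rule AE_Pxi_imp_null_sets[OF AE])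
      (simp, auto simp: trapezoid_def Theta_def zero_le_mult_iff)
  moreover have "a > 0 \<Longrightarrow> trapezoid (-1) (-1/2) 0 0 1 \<in> null_sets lborel"
    by (rule AE_Pxi_imp_null_sets[OF AE])
      (simp, auto simp: trapezoid_def Theta_def zero_le_mult_iff)
  ultimately show ?thesis by force
qed

lemma M1_K_fst_eq_one: "y \<in> M1 \<inter> K \<Longrightarrow> fst y = 1"
proof -
  assume y: "y \<in> M1 \<inter> K"
  then obtain a where "snd y = (\<lambda>t. a * t)" by (auto simp: K_def)
  with y have "(fst y, \<lambda>t. a * t) \<in> M1" by (metis prod.collapse IntD1)
  then have "a = 0" by (rule M1_linear_rule_slope_zero)
  then have "1/3 \<le> measure Pxi (M1_event (fst y) (\<lambda>_. 0))" and "fst y \<in> {0..1}"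
    using y \<open>snd y = _\<close> by (simp_all add: M1_iff)
  then show ?thesis
    using measure_M1_event_zero[of "fst y"] by simp
qed

lemma M2_linear_rule_bound:
  assumes "-1 \<le> a" and y: "(c, \<lambda>t. a * t) \<in> M2"
  shows "2/3 \<le> c \<and> (c = 2/3 \<longrightarrow> a = 3/2)"
proof -
  have P: "1/3 \<le> measure Pxi (M2_event c (\<lambda>t. a * t))" using y by (simp add: M2_iff)
  have c: "c \<in> {0..1}" using M2_fst_in_unit[OF y] by simp
  consider "a < 0" | "a = 0" | "0 < a" by linarith
  then show ?thesis
  proof cases
    case 1
    then show ?thesis using P measure_M2_event_neg_slope[OF assms(1) 1, of c] by simp
  next
    case 2
    then have "M2_event c (\<lambda>t. a * t) = M1_event c (\<lambda>_. 0)"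
      using c by (auto simp: M2_event_def M1_event_def)
    then show ?thesis using P c measure_M1_event_zero[of c] by simp
  next
    case 3
    define m where "m = min c (1 / a)"
    have m: "0 \<le> m" "m \<le> c" "a * m \<le> 1"
      using 3 c by (auto simp: m_def min_def field_simps)
    have area: "1 \<le> m * (a * m / 2 + 1)"
      using P measure_M2_event_pos_slope[OF 3, of c] c by (simp add: m_def)
    also have "\<dots> \<le> m * (3/2)"
      using m by (intro mult_left_mono) auto
    finally have "2/3 \<le> m" by simp
    moreover have "a = 3/2" if "c = 2/3"
    proof -
      have "m = 2/3" using \<open>2/3 \<le> m\<close> m that by simp
      have "1 \<le> 2/3 * (a * (2/3) / 2 + 1)" "a * (2/3) \<le> 1"
        using area m(3) unfolding \<open>m = 2/3\<close> by simp_all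
      then show ?thesis by simp
    qed
    ultimately show ?thesis using m by auto
  qed
qed

lemma M2_K_lower_bound:
  assumes "y \<in> M2 \<inter> K"
  shows "2/3 \<le> fst y \<and> (fst y = 2/3 \<longrightarrow> y = (2/3, \<lambda>t. 3/2 * t))"
proof -
  from assms obtain a where "-1 \<le> a" and rule: "snd y = (\<lambda>t. a * t)"
    by (auto simp: K_def)
  have "(fst y, \<lambda>t. a * t) \<in> M2"
    using assms rule by (metis prod.collapse IntD1)
  with \<open>-1 \<le> a\<close> have bound: "2/3 \<le> fst y \<and> (fst y = 2/3 \<longrightarrow> a = 3/2)"
    by (rule M2_linear_rule_bound)
  show ?thesis
  proof (intro conjI impI)
    show "2/3 \<le> fst y" using bound ..
    assume fst: "fst y = 2/3"
    with bound have slope: "a = 3/2" by simp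
    show "y = (2/3, \<lambda>t. 3/2 * t)"
      unfolding prod_eq_iff fst rule slope by simp
  qed
qed

lemma M1_Proj_K_fst_ge: "y \<in> M1 \<inter> Proj ` K \<Longrightarrow> 1/2 \<le> fst y"
proof -
  assume y: "y \<in> M1 \<inter> Proj ` K"
  then obtain a where "-1 \<le> a" and rule: "snd y = (\<lambda>t. clip (a * t))"
    by (auto simp: K_def Proj_def)
  have P: "1/3 \<le> measure Pxi (M1_event (fst y) (\<lambda>t. clip (a * t)))" and c: "fst y \<in> {0..1}"
    using y rule by (simp_all add: M1_iff)
  show ?thesis
  proof (cases "a \<le> 0")
    case True
    then show ?thesis using P c measure_M1_event_clip_nonpos_slope[OF \<open>-1 \<le> a\<close> True, of "fst y"] by simp
  next
    case False
    then show ?thesis using P c measure_M1_event_clip_pos_slope[of a "fst y"] by simp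
  qed
qed

lemma const_rule_in_M1: "(0, \<lambda>_. 1) \<in> M1"
proof -
  have "1/3 \<le> measure Pxi (M1_event 0 (\<lambda>_. 1))"
  proof (rule measure_Pxi_ge)
    show "trapezoid (-1) 0 0 0 1 \<subseteq> M1_event 0 (\<lambda>_. 1) \<inter> Theta"
      by (auto simp: trapezoid_def M1_event_def Theta_def)
  qed (simp_all add: M1_event_sets emeasure_trapezoid)
  then show ?thesis by (simp add: M1_iff)
qed

lemma zero_slope_rule_in_M1_K: "(1, \<lambda>t. 0 * t) \<in> M1 \<inter> K"
proof -
  have "1/3 \<le> measure Pxi (M1_event 1 (\<lambda>t. 0 * t))"
  proof (rule measure_Pxi_ge)
    show "trapezoid 0 1 (-1) 0 0 \<subseteq> M1_event 1 (\<lambda>t. 0 * t) \<inter> Theta"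
      by (auto simp: trapezoid_def M1_event_def Theta_def)
  qed (simp_all add: M1_event_sets emeasure_trapezoid)
  then show ?thesis using linear_rule_in_K[of 0 1] by (simp add: M1_iff)
qed

lemma three_halves_slope_rule_in_M2_K: "(2/3, \<lambda>t. 3/2 * t) \<in> M2 \<inter> K"
proof -
  have "1/3 \<le> measure Pxi (M2_event (2/3) (\<lambda>t. 3/2 * t))"
  proof (rule measure_Pxi_ge)
    show "trapezoid 0 (2/3) (-1) (3/2) 0 \<subseteq> M2_event (2/3) (\<lambda>t. 3/2 * t) \<inter> Theta"
      by (auto simp: trapezoid_def M2_event_def Theta_def)
  qed (simp_all add: M2_event_sets emeasure_trapezoid)
  then show ?thesis using linear_rule_in_K[of "3/2" "2/3"] by (simp add: M2_iff)
qed

lemma Proj_neg_slope_rule_in_M1_Proj_K: "Proj (1/2, \<lambda>t. - t) \<in> M1 \<inter> Proj ` K"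
proof -
  let ?T1 = "trapezoid (-1) 0 0 (-1) 0" and ?T2 = "trapezoid 0 (1/2) (-1) 0 0"
  have "?T1 \<inter> ?T2 \<in> null_sets lborel"
    by (rule null_sets_subset[OF null_sets_vertical_line[of 0]]) (simp, auto simp: trapezoid_def)
  then have "emeasure lborel (?T1 \<union> ?T2) = emeasure lborel ?T1 + emeasure lborel ?T2"
    by (intro emeasure_Un') simp_all
  also have "\<dots> = ennreal (1/2) + ennreal (1/2)"
    by (simp add: emeasure_trapezoid)
  also have "\<dots> = ennreal 1"
    by (subst ennreal_plus[symmetric]) auto
  finally have area: "emeasure lborel (?T1 \<union> ?T2) = ennreal 1" .
  have meas [measurable]: "(\<lambda>t. clip (- t)) \<in> borel_measurable borel"
    unfolding clip_def by measurable
  have "1/3 \<le> measure Pxi (M1_event (1/2) (\<lambda>t. clip (- t)))"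
  proof (rule measure_Pxi_ge)
    show "?T1 \<union> ?T2 \<subseteq> M1_event (1/2) (\<lambda>t. clip (- t)) \<inter> Theta"
      by (auto simp: trapezoid_def M1_event_def Theta_def clip_def)
    show "ennreal 1 \<le> emeasure lborel (?T1 \<union> ?T2)"
      using area by simp
  qed (simp_all add: M1_event_sets)
  then have "Proj (1/2, \<lambda>t. - t) \<in> M1"
    using meas by (simp add: M1_iff Proj_def clip_eq_self)
  moreover have "(1/2, \<lambda>t. - t) \<in> K"
    using linear_rule_in_K[of "-1" "1/2"] by simp
  ultimately show ?thesis by blast
qed

lemma Inf_h_argmin: "y \<in> argmin_h S \<Longrightarrow> Inf (h ` S) = h y"
  unfolding argmin_h_def by (auto intro: cInf_eq_minimum)

lemma h_Proj: "fst y \<in> {0..1} \<Longrightarrow> h (Proj y) = h y"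
  by (simp add: h_def Proj_def clip_eq_self)

lemma argmin_h_M1: "(0, \<lambda>_. 1) \<in> argmin_h M1"
  using const_rule_in_M1 by (auto simp: argmin_h_def h_def M1_iff)

lemma argmin_h_M1_K: "(1, \<lambda>t. 0 * t) \<in> argmin_h (M1 \<inter> K)"
  using zero_slope_rule_in_M1_K M1_K_fst_eq_one by (auto simp: argmin_h_def h_def)

lemma argmin_h_M2_K: "argmin_h (M2 \<inter> K) = {(2/3, \<lambda>t. 3/2 * t)}"
proof -
  have fst_ge: "2/3 \<le> fst y" if "y \<in> M2 \<inter> K" for y
    using M2_K_lower_bound[OF that] by (rule conjunct1)
  have "(2/3, \<lambda>t. 3/2 * t) \<in> argmin_h (M2 \<inter> K)"
    using three_halves_slope_rule_in_M2_K fst_ge by (simp add: argmin_h_def h_def)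
  moreover have "y = (2/3, \<lambda>t. 3/2 * t)" if "y \<in> argmin_h (M2 \<inter> K)" for y
  proof -
    have y: "y \<in> M2 \<inter> K" and "\<forall>z \<in> M2 \<inter> K. fst y \<le> fst z"
      using that by (simp_all add: argmin_h_def h_def)
    then have "fst y \<le> fst (2/3 :: real, \<lambda>t::real. 3/2 * t)"
      using three_halves_slope_rule_in_M2_K by blast
    then have "fst y = 2/3" using fst_ge[OF y] by simp
    with conjunct2[OF M2_K_lower_bound[OF y]] show ?thesis by (rule mp)
  qed
  ultimately show ?thesis by blast
qed

lemma argmin_h_Proj_M2_K: "Proj (2/3, \<lambda>t. 3/2 * t) \<in> argmin_h (Proj ` (M2 \<inter> K))"
proof -
  have "h (Proj y) = h y" if "y \<in> M2 \<inter> K" for y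
    using that by (intro h_Proj M2_fst_in_unit) blast
  then show ?thesis
    using argmin_h_M2_K three_halves_slope_rule_in_M2_K by (auto simp: argmin_h_def)
qed

lemma argmin_h_M1_Proj_K: "Proj (1/2, \<lambda>t. - t) \<in> argmin_h (M1 \<inter> Proj ` K)"
  using Proj_neg_slope_rule_in_M1_Proj_K M1_Proj_K_fst_ge
  by (auto simp: argmin_h_def h_def Proj_def clip_eq_self)

theorem mainTheorem3:
  shows "phi = 0 \<and> phi1 = 1 \<and> phi2 = 2/3 \<and> phi3 = 2/3 \<and> phi4 = 1/2
    \<and> argmin_h (M2 \<inter> K) = {(2/3, \<lambda>t. 3/2 * t)}
    \<and> Proj (2/3, \<lambda>t. 3/2 * t) = (2/3, \<lambda>t. max 0 (min (3/2 * t) 1))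
    \<and> Proj (2/3, \<lambda>t. 3/2 * t) \<in> argmin_h (Proj ` (M2 \<inter> K))
    \<and> (1/2, \<lambda>t. max 0 (min (- t) 1)) = Proj (1/2, \<lambda>t. - t)
    \<and> (1/2, \<lambda>t. max 0 (min (- t) 1)) \<in> argmin_h (M1 \<inter> Proj ` K)"
proof -
  have Proj_three_halves: "Proj (2/3, \<lambda>t. 3/2 * t) = (2/3, \<lambda>t. max 0 (min (3/2 * t) 1))"
    by (simp add: Proj_def clip_def)
  have Proj_neg: "(1/2, \<lambda>t. max 0 (min (- t) 1)) = Proj (1/2, \<lambda>t. - t)"
    by (simp add: Proj_def clip_def)
  have "phi = 0" "phi1 = 1"
    using Inf_h_argmin[OF argmin_h_M1] Inf_h_argmin[OF argmin_h_M1_K]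
    by (simp_all add: phi_def phi1_def h_def)
  moreover have "phi2 = 2/3" "phi3 = 2/3"
    using Inf_h_argmin[OF argmin_h_Proj_M2_K]
    unfolding phi2_def phi3_def argmin_h_M2_K image_insert image_empty
      Proj_three_halves h_def by simp_all
  moreover have "phi4 = 1/2"
    using Inf_h_argmin[OF argmin_h_M1_Proj_K]
    by (simp add: phi4_def flip: Proj_neg) (simp add: h_def)
  ultimately show ?thesis
    using argmin_h_M2_K argmin_h_Proj_M2_K argmin_h_M1_Proj_K Proj_three_halves Proj_neg
    by (simp only: simp_thms)
qed

end
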